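(* For every $\alpha\ge1$ there exist reals $0<v_1<\dots<v_n$ and a distribution $\mathcal{D}$ on $\{v_1,\dots,v_n\}$ with full support such that no buyer-optimal signaling scheme for $\mathcal{D}$ is $\alpha$-majorized.
   Context: Values and prior. $v_0:=0$, $f_{\mathcal{D}}$ is the mass function of $\mathcal{D}$, $F_{\mathcal{D}}$ its CDF, and $G_S(p)=\Pr_{v\sim S}[v\ge p]$. Signals and pricing. A signal is a distribution $S$ on $\{v_1,\dots,v_n\}$. The seller posts $p^*_S$, the smallest $v$ in the support of $S$ maximizing $v\,G_S(v)$. The surplus of value $v$ is $cs_v(S)=\mathbb{1}[v\ge p^*_S](v-p^*_S)$. Signaling schemes. A signaling scheme is $\mathcal{Z}=\{(S_q,\gamma_q)\}$ with $\gamma_q\ge0$, $\sum\gamma_q=1$ and $\sum_q\gamma_q f_{S_q}=f_{\mathcal{D}}$. Its expected consumer surplus at $v_i$ is $cs_{v_i}(\mathcal{Z})=\sum_q cs_{v_i}(S_q)\gamma_q f_{S_q}(v_i)/f_{\mathcal{D}}(v_i)$. $\mathcal{Z}$ is buyer-optimal if $\sum_i f_{\mathcal{D}}(v_i)cs_{v_i}(\mathcal{Z})=\sum_i f_{\mathcal{D}}(v_i)v_i-\max_p p\,G_{\mathcal{D}}(p)$. Majorization. The surplus-mass function $s_{\mathcal{Z}}$ on $(0,1]$ equals $cs_{v_i}(\mathcal{Z})$ on $(F_{\mathcal{D}}(v_{i-1}),F_{\mathcal{D}}(v_i)]$. For a finite step function $f$ on $(0,1]$, $\mathrm{Pf}(f,m)=\int_0^m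 f_{\mathrm{sorted}}$, where $f_{\mathrm{sorted}}$ rearranges the steps of $f$ in ascending order. $\mathcal{Z}$ is $\alpha$-majorized if $\alpha\,\mathrm{Pf}(s_{\mathcal{Z}},m)\ge\mathrm{Pf}(s_{\mathcal{Z}'},m)$ for every signaling scheme $\mathcal{Z}'$ for $\mathcal{D}$ and every $m\in(0,1]$. *)

theory Defs
  imports Complex_Main
begin

text \<open>Values are v 1 < ... < v n (indexed by 1..n); a distribution on these values
is represented by its mass function on the indices 1..n.\<close>

definition valid_values :: "nat \<Rightarrow> (nat \<Rightarrow> real) \<Rightarrow> bool" where
  "valid_values n v \<longleftrightarrow> (\<forall>i\<in>{1..n}. 0 < v i) \<and> (\<forall>i\<in>{1..n}. \<forall>j\<in>{1..n}. i < j \<longrightarrow> v i < v j)"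

definition is_dist :: "nat \<Rightarrow> (nat \<Rightarrow> real) \<Rightarrow> bool" where
  "is_dist n f \<longleftrightarrow> (\<forall>i. f i \<ge> 0) \<and> (\<forall>i. i \<notin> {1..n} \<longrightarrow> f i = 0) \<and> (\<Sum>i\<in>{1..n}. f i) = 1"

definition full_support :: "nat \<Rightarrow> (nat \<Rightarrow> real) \<Rightarrow> bool" where
  "full_support n f \<longleftrightarrow> (\<forall>i\<in>{1..n}. f i > 0)"

definition G :: "nat \<Rightarrow> (nat \<Rightarrow> real) \<Rightarrow> (nat \<Rightarrow> real) \<Rightarrow> real \<Rightarrow> real" where
  "G n v S p = (\<Sum>j\<in>{1..n}. if p \<le> v j then S j else 0)"

definition price :: "nat \<Rightarrow> (nat \<Rightarrow> real) \<Rightarrow> (nat \<Rightarrow> real) \<Rightarrow> real" where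
  "price n v S = Min {v i | i. i \<in> {1..n} \<and> S i > 0 \<and>
       (\<forall>j\<in>{1..n}. S j > 0 \<longrightarrow> v j * G n v S (v j) \<le> v i * G n v S (v i))}"

definition cs :: "nat \<Rightarrow> (nat \<Rightarrow> real) \<Rightarrow> (nat \<Rightarrow> real) \<Rightarrow> real \<Rightarrow> real" where
  "cs n v S x = (if x \<ge> price n v S then x - price n v S else 0)"

type_synonym scheme = "((nat \<Rightarrow> real) \<times> real) list"

definition is_scheme :: "nat \<Rightarrow> (nat \<Rightarrow> real) \<Rightarrow> scheme \<Rightarrow> bool" where
  "is_scheme n fD Z \<longleftrightarrow>
     (\<forall>(S, \<gamma>) \<in> set Z. is_dist n S \<and> \<gamma> \<ge> 0) \<and>
     (\<Sum>(S, \<gamma>) \<leftarrow> Z. \<gamma>) = 1 \<and>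
     (\<forall>i. (\<Sum>(S, \<gamma>) \<leftarrow> Z. \<gamma> * S i) = fD i)"

definition cs_scheme :: "nat \<Rightarrow> (nat \<Rightarrow> real) \<Rightarrow> (nat \<Rightarrow> real) \<Rightarrow> scheme \<Rightarrow> nat \<Rightarrow> real" where
  "cs_scheme n v fD Z i = (\<Sum>(S, \<gamma>) \<leftarrow> Z. cs n v S (v i) * \<gamma> * S i / fD i)"

definition buyer_optimal :: "nat \<Rightarrow> (nat \<Rightarrow> real) \<Rightarrow> (nat \<Rightarrow> real) \<Rightarrow> scheme \<Rightarrow> bool" where
  "buyer_optimal n v fD Z \<longleftrightarrow>
     (\<Sum>i\<in>{1..n}. fD i * cs_scheme n v fD Z i) =
     (\<Sum>i\<in>{1..n}. fD i * v i) - (SUP p::real. p * G n v fD p)"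

text \<open>A finite step function on (0,1] given as the list of its steps (height, width),
  listed left to right. The surplus-mass function s_Z has the step of height
  cs_{v_i}(Z) on (F(v_{i-1}), F(v_i)], whose width is f_D(v_i).\<close>
definition surplus_steps :: "nat \<Rightarrow> (nat \<Rightarrow> real) \<Rightarrow> (nat \<Rightarrow> real) \<Rightarrow> scheme \<Rightarrow> (real \<times> real) list" where
  "surplus_steps n v fD Z = map (\<lambda>i. (cs_scheme n v fD Z i, fD i)) [1..<Suc n]"

fun step_integral :: "(real \<times> real) list \<Rightarrow> real \<Rightarrow> real" where
  "step_integral [] m = 0"
| "step_integral ((h, w) # rest) m = h * min w (max m 0) + step_integral rest (m - w)"

definition Pf :: "(real \<times> real) list \<Rightarrow> real \<Rightarrow> real" where
  "Pf steps m = step_integral (sort_key fst steps) m"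

definition majorized :: "real \<Rightarrow> nat \<Rightarrow> (nat \<Rightarrow> real) \<Rightarrow> (nat \<Rightarrow> real) \<Rightarrow> scheme \<Rightarrow> bool" where
  "majorized \<alpha> n v fD Z \<longleftrightarrow>
     (\<forall>Z'. is_scheme n fD Z' \<longrightarrow> (\<forall>m. 0 < m \<and> m \<le> 1 \<longrightarrow>
        \<alpha> * Pf (surplus_steps n v fD Z) m \<ge> Pf (surplus_steps n v fD Z') m))"

end

(*
  Take the values 1, 1 + t, 1 + 2t with prior proportional to (t^2, 2t, 4), where t = 1/(4 alpha).
  Posting the top price 1 + 2t is revenue-optimal for the prior, and on every signal the seller
  earns at least the revenue of that price; hence a buyer-optimal scheme earns exactly that revenue
  on each signal it uses. On such a signal the middle value gets surplus only if the price is 1,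
  and then it carries no more mass than the lowest value; this bounds the average surplus of the
  middle value by t^2/2. The lowest value never gets surplus, so the sorted surplus-mass function
  of a buyer-optimal scheme integrates to at most f(v_1) t^2/2 over [0, 2 f(v_1)], whereas a
  three-signal scheme with prices 1, 1 + t, 1 + 2t achieves f(v_1) t/4 > alpha f(v_1) t^2/2.
*)

theory Submission
  imports Defs
begin

definition welfare :: "nat \<Rightarrow> (nat \<Rightarrow> real) \<Rightarrow> (nat \<Rightarrow> real) \<Rightarrow> real" where
  "welfare n v S = (\<Sum>i\<in>{1..n}. S i * v i)"

definition surplus :: "nat \<Rightarrow> (nat \<Rightarrow> real) \<Rightarrow> (nat \<Rightarrow> real) \<Rightarrow> real" where
  "surplus n v S = (\<Sum>i\<in>{1..n}. S i * cs n v S (v i))"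

lemma G_nonneg: "is_dist n S \<Longrightarrow> 0 \<le> G n v S p"
  unfolding G_def is_dist_def by (auto intro: sum_nonneg)

lemma G_eq_sum_indicator: "G n v S p = (\<Sum>j\<in>{1..n}. S j * (if p \<le> v j then 1 else 0))"
  unfolding G_def by (intro sum.cong) auto

lemma cs_nonneg: "0 \<le> cs n v S x"
  unfolding cs_def by simp

lemma price_attained:
  assumes "is_dist n S"
  obtains k where "k \<in> {1..n}" "S k > 0" "price n v S = v k"
    "\<forall>j\<in>{1..n}. S j > 0 \<longrightarrow> v j * G n v S (v j) \<le> v k * G n v S (v k)"
proof -
  define P where "P = {i\<in>{1..n}. S i > 0}"
  define h where "h i = v i * G n v S (v i)" for i
  define A where "A = {v i | i. i \<in> {1..n} \<and> S i > 0 \<and>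
       (\<forall>j\<in>{1..n}. S j > 0 \<longrightarrow> v j * G n v S (v j) \<le> v i * G n v S (v i))}"
  have "P \<noteq> {}"
  proof
    assume "P = {}"
    then have "\<forall>i\<in>{1..n}. S i = 0"
      using assms unfolding P_def is_dist_def by (auto simp: order_less_le)
    then show False using assms unfolding is_dist_def by simp
  qed
  moreover have "finite P" unfolding P_def by simp
  ultimately have "Max (h ` P) \<in> h ` P" by simp
  then obtain k where k: "k \<in> P" "h k = Max (h ` P)" by (metis imageE)
  then have "\<forall>j\<in>P. h j \<le> h k" using \<open>finite P\<close> by simp
  have "finite A"
    by (rule finite_subset[of _ "v ` {1..n}"]) (auto simp: A_def)
  moreover have "v k \<in> A" using k \<open>\<forall>j\<in>P. h j \<le> h k\<close> unfolding A_def P_def h_def by auto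
  ultimately have "Min A \<in> A" by (intro Min_in) auto
  then show ?thesis using that unfolding price_def A_def[symmetric] by (auto simp: A_def)
qed

lemma price_eqI:
  assumes "k \<in> {1..n}" "S k > 0"
    and "\<forall>j\<in>{1..n}. S j > 0 \<longrightarrow> v j * G n v S (v j) \<le> v k * G n v S (v k)"
    and "\<forall>j\<in>{1..n}. S j > 0 \<longrightarrow> v j < v k \<longrightarrow> v j * G n v S (v j) < v k * G n v S (v k)"
  shows "price n v S = v k"
proof -
  define A where "A = {v i | i. i \<in> {1..n} \<and> S i > 0 \<and>
       (\<forall>j\<in>{1..n}. S j > 0 \<longrightarrow> v j * G n v S (v j) \<le> v i * G n v S (v i))}"
  have "finite A"
    by (rule finite_subset[of _ "v ` {1..n}"]) (auto simp: A_def)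
  moreover have "v k \<in> A" unfolding A_def using assms by auto
  moreover have "v k \<le> x" if "x \<in> A" for x
    using that assms unfolding A_def by (force simp: not_less[symmetric])
  ultimately have "Min A = v k" by (intro Min_eqI)
  then show ?thesis unfolding price_def A_def[symmetric] .
qed

lemma cs_lowest_value:
  assumes "valid_values n v" "is_dist n S"
  shows "cs n v S (v 1) = 0"
proof -
  obtain k where "k \<in> {1..n}" "price n v S = v k" using price_attained[OF assms(2)] by metis
  moreover have "v 1 \<le> v k" using calculation assms(1) unfolding valid_values_def
    by (cases "k = 1") (auto intro: less_imp_le)
  ultimately show ?thesis unfolding cs_def by auto
qed

text \<open>Any p can be raised to the least supported value above it without losing demand.\<close>
lemma revenue_le_price_revenue:
  assumes v: "valid_values n v" and S: "is_dist n S"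
  shows "p * G n v S p \<le> price n v S * G n v S (price n v S)"
proof -
  obtain k where k: "k \<in> {1..n}" "S k > 0" "price n v S = v k"
    and opt: "\<forall>j\<in>{1..n}. S j > 0 \<longrightarrow> v j * G n v S (v j) \<le> v k * G n v S (v k)"
    using price_attained[OF S] by metis
  define A where "A = {j\<in>{1..n}. S j > 0 \<and> p \<le> v j}"
  have S_nonneg: "\<And>j. 0 \<le> S j" using S unfolding is_dist_def by auto
  show ?thesis
  proof (cases "A = {}")
    case True
    then have "G n v S p = 0"
      unfolding G_def A_def using S_nonneg by (intro sum.neutral) (force simp: order_less_le)
    moreover have "0 \<le> v k * G n v S (v k)"
      using k v G_nonneg[OF S] unfolding valid_values_def by (simp add: less_imp_le)
    ultimately show ?thesis using k by simp
  next
    case False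
    define l where "l = arg_min_on v A"
    have "finite A" unfolding A_def by simp
    then have l: "l \<in> A" and l_min: "\<And>j. j \<in> A \<Longrightarrow> v l \<le> v j"
      using False arg_min_if_finite(1) arg_min_least unfolding l_def by metis+
    have "G n v S p = G n v S (v l)"
      unfolding G_def
    proof (intro sum.cong refl)
      fix j assume "j \<in> {1..n}"
      then show "(if p \<le> v j then S j else 0) = (if v l \<le> v j then S j else 0)"
        using l l_min[of j] S_nonneg[of j] unfolding A_def by (auto simp: order_less_le)
    qed
    then have "p * G n v S p \<le> v l * G n v S (v l)"
      using l G_nonneg[OF S] unfolding A_def by (simp add: mult_right_mono)
    also have "\<dots> \<le> v k * G n v S (v k)" using opt l unfolding A_def by simp
    finally show ?thesis using k by simp
  qed
qed

lemma SUP_revenue_eq_price_revenue: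
  assumes "valid_values n v" "is_dist n S"
  shows "(SUP p. p * G n v S p) = price n v S * G n v S (price n v S)"
  using revenue_le_price_revenue[OF assms] by (intro cSup_eq_maximum) auto

lemma surplus_le_welfare_minus_revenue:
  assumes v: "valid_values n v" and S: "is_dist n S"
  shows "surplus n v S \<le> welfare n v S - p * G n v S p"
proof -
  let ?q = "price n v S"
  have "surplus n v S \<le> (\<Sum>i\<in>{1..n}. S i * v i - ?q * (if ?q \<le> v i then S i else 0))"
    unfolding surplus_def
  proof (rule sum_mono)
    fix i assume "i \<in> {1..n}"
    then have "0 \<le> S i * v i" using v S unfolding valid_values_def is_dist_def
      by (simp add: less_imp_le)
    then show "S i * cs n v S (v i) \<le> S i * v i - ?q * (if ?q \<le> v i then S i else 0)"
      unfolding cs_def by (simp add: algebra_simps)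
  qed
  also have "\<dots> = welfare n v S - ?q * G n v S ?q"
    unfolding welfare_def G_def by (simp add: sum_subtractf sum_distrib_left)
  also have "\<dots> \<le> welfare n v S - p * G n v S p"
    using revenue_le_price_revenue[OF v S] by simp
  finally show ?thesis .
qed

lemma sum_sum_list_swap:
  "(\<Sum>i\<in>A. \<Sum>(S, \<gamma>)\<leftarrow>Z. f i S \<gamma>) = (\<Sum>(S, \<gamma>)\<leftarrow>Z. \<Sum>i\<in>A. (f i S \<gamma> :: 'a::comm_monoid_add))"
  by (induction Z) (auto simp: sum.distrib)

lemma mixture_sum:
  assumes "is_scheme n fD Z"
  shows "(\<Sum>(S, \<gamma>)\<leftarrow>Z. \<gamma> * (\<Sum>i\<in>A. S i * w i)) = (\<Sum>i\<in>A. fD i * w i)"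
proof -
  have fD: "fD i = (\<Sum>(S, \<gamma>)\<leftarrow>Z. \<gamma> * S i)" for i
    using assms unfolding is_scheme_def by simp
  have "(\<Sum>i\<in>A. fD i * w i) = (\<Sum>i\<in>A. \<Sum>(S, \<gamma>)\<leftarrow>Z. \<gamma> * (S i * w i))"
    unfolding fD by (simp add: split_def sum_list_mult_const[symmetric] mult.assoc)
  also have "\<dots> = (\<Sum>(S, \<gamma>)\<leftarrow>Z. \<gamma> * (\<Sum>i\<in>A. S i * w i))"
    by (simp add: sum_sum_list_swap sum_distrib_left)
  finally show ?thesis ..
qed

lemma mult_cs_scheme:
  assumes "fD i \<noteq> 0"
  shows "fD i * cs_scheme n v fD Z i = (\<Sum>(S, \<gamma>)\<leftarrow>Z. \<gamma> * (S i * cs n v S (v i)))"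
  unfolding cs_scheme_def using assms
  by (simp add: split_def sum_list_const_mult[symmetric] mult.commute mult.left_commute)

lemma cs_scheme_nonneg:
  assumes "is_scheme n fD Z" "0 < fD i"
  shows "0 \<le> cs_scheme n v fD Z i"
  unfolding cs_scheme_def using assms cs_nonneg unfolding is_scheme_def is_dist_def
  by (intro sum_list_nonneg) fastforce

lemma cs_scheme_lowest_value:
  assumes "valid_values n v" "is_scheme n fD Z"
  shows "cs_scheme n v fD Z 1 = 0"
proof -
  have "cs n v S (v 1) = 0" if "(S, \<gamma>) \<in> set Z" for S \<gamma>
    using assms(2) that cs_lowest_value[OF assms(1)] unfolding is_scheme_def by auto
  then have "(\<Sum>(S, \<gamma>)\<leftarrow>Z. cs n v S (v 1) * \<gamma> * S 1 / fD 1) = (\<Sum>_\<leftarrow>Z. 0)"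
    by (intro arg_cong[where f = sum_list] map_cong) auto
  then show ?thesis unfolding cs_scheme_def by simp
qed

lemma sum_mult_cs_scheme:
  assumes "full_support n fD"
  shows "(\<Sum>i\<in>{1..n}. fD i * cs_scheme n v fD Z i) = (\<Sum>(S, \<gamma>)\<leftarrow>Z. \<gamma> * surplus n v S)"
proof -
  have "(\<Sum>i\<in>{1..n}. fD i * cs_scheme n v fD Z i)
      = (\<Sum>i\<in>{1..n}. \<Sum>(S, \<gamma>)\<leftarrow>Z. \<gamma> * (S i * cs n v S (v i)))"
    using assms unfolding full_support_def
    by (intro sum.cong refl mult_cs_scheme) (auto simp: less_imp_neq[symmetric])
  then show ?thesis by (simp add: sum_sum_list_swap surplus_def sum_distrib_left)
qed

text \<open>Buyer optimality leaves the seller only the revenue of the optimal uniform price q; since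
  every signal yields the seller at least the revenue of q, no signal used with positive
  weight may give the seller more.\<close>
lemma buyer_optimal_signal_tight:
  assumes v: "valid_values n v" and Z: "is_scheme n fD Z" and fD: "full_support n fD"
    and opt: "buyer_optimal n v fD Z" and q: "(SUP p. p * G n v fD p) = q * G n v fD q"
    and S: "(S, \<gamma>) \<in> set Z" "0 < \<gamma>"
  shows "surplus n v S = welfare n v S - q * G n v S q"
proof -
  define gap where "gap S = welfare n v S - q * G n v S q - surplus n v S" for S
  have gap_nonneg: "0 \<le> \<gamma> * gap S" if "(S, \<gamma>) \<in> set Z" for S \<gamma>
    using Z that surplus_le_welfare_minus_revenue[OF v, of S q] unfolding is_scheme_def gap_def
    by auto
  have "(\<Sum>(S, \<gamma>)\<leftarrow>Z. \<gamma> * gap S) = (\<Sum>(S, \<gamma>)\<leftarrow>Z. \<gamma> * welfare n v S)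
      - q * (\<Sum>(S, \<gamma>)\<leftarrow>Z. \<gamma> * G n v S q) - (\<Sum>(S, \<gamma>)\<leftarrow>Z. \<gamma> * surplus n v S)"
    unfolding gap_def by (induction Z) (auto simp: algebra_simps)
  also have "\<dots> = 0"
    using opt q sum_mult_cs_scheme[OF fD, of v Z]
      mixture_sum[OF Z, where A = "{1..n}" and w = v]
      mixture_sum[OF Z, where A = "{1..n}" and w = "\<lambda>j. if q \<le> v j then 1 else 0"]
    unfolding buyer_optimal_def welfare_def G_eq_sum_indicator by simp
  finally have "\<gamma> * gap S = 0"
    using gap_nonneg S(1) sum_list_nonneg_eq_0_iff[of "map (\<lambda>(S, \<gamma>). \<gamma> * gap S) Z"] by force
  then show ?thesis using S(2) unfolding gap_def by simp
qed

lemma atLeastAtMost_1_3: "{1..3::nat} = {1, 2, 3}"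
  by auto

lemma sum_1_to_3: "(\<Sum>i\<in>{1..3::nat}. f i) = f 1 + f 2 + (f 3 :: 'a::comm_monoid_add)"
  unfolding atLeastAtMost_1_3 by (simp add: add.assoc)

lemma G_3: "G 3 v S p = (if p \<le> v 1 then S 1 else 0) + (if p \<le> v 2 then S 2 else 0)
    + (if p \<le> v 3 then S 3 else 0)"
  unfolding G_def sum_1_to_3 ..

lemma Pf_three_steps_first_zero:
  assumes "0 < w1" "w1 \<le> w2" "w1 \<le> w3" "0 \<le> c2" "0 \<le> c3"
  shows "Pf [(0, w1), (c2, w2), (c3, w3)] (2 * w1) = w1 * min c2 c3"
  using assms unfolding Pf_def by (cases "c2 \<le> c3") (auto simp: min_def max_def)

lemma surplus_steps_3:
  "surplus_steps 3 v fD Z =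
    [(cs_scheme 3 v fD Z 1, fD 1), (cs_scheme 3 v fD Z 2, fD 2), (cs_scheme 3 v fD Z 3, fD 3)]"
proof -
  have "[1..<Suc 3] = [1, 2, 3::nat]" by (simp add: numeral_3_eq_3 upt_rec)
  then show ?thesis unfolding surplus_steps_def by simp
qed

definition vals :: "real \<Rightarrow> nat \<Rightarrow> real" where
  "vals t i = 1 + t * (real i - 1)"

definition prior_mass :: "real \<Rightarrow> real" where
  "prior_mass t = t^2 + 2 * t + 4"

definition prior :: "real \<Rightarrow> nat \<Rightarrow> real" where
  "prior t i = (if i = 1 then t^2 else if i = 2 then 2 * t else if i = 3 then 4 else 0) / prior_mass t"

lemma vals_simps: "vals t 1 = 1" "vals t (Suc 0) = 1" "vals t 2 = 1 + t" "vals t 3 = 1 + 2 * t"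
  by (simp_all add: vals_def)

lemma prior_simps:
  "prior t 1 = t^2 / prior_mass t" "prior t (Suc 0) = t^2 / prior_mass t"
  "prior t 2 = 2 * t / prior_mass t" "prior t 3 = 4 / prior_mass t"
  by (simp_all add: prior_def)

lemma prior_mass_pos: "0 < t \<Longrightarrow> 0 < prior_mass t"
  unfolding prior_mass_def by (simp add: add_pos_pos)

lemma valid_values_vals: "0 < t \<Longrightarrow> valid_values 3 (vals t)"
  unfolding valid_values_def vals_def by (auto simp: add_pos_nonneg)

lemma full_support_prior: "0 < t \<Longrightarrow> full_support 3 (prior t)"
  unfolding full_support_def prior_def using prior_mass_pos[of t] by auto

lemma is_dist_prior: "0 < t \<Longrightarrow> is_dist 3 (prior t)"
proof -
  assume t: "0 < t"
  have "prior t 1 + prior t 2 + prior t 3 = 1"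
    using prior_mass_pos[OF t] by (simp add: prior_simps prior_mass_def add_divide_distrib[symmetric])
  then show ?thesis
    using full_support_prior[OF t] t prior_mass_pos[OF t]
    unfolding is_dist_def full_support_def sum_1_to_3 by (auto simp: prior_def)
qed

lemma price_prior:
  assumes t: "0 < t" "t < 1"
  shows "price 3 (vals t) (prior t) = 1 + 2 * t"
proof -
  have W: "0 < prior_mass t" using prior_mass_pos t by simp
  have "prior_mass t < (1 + 2 * t) * 4"
    using t by (simp add: prior_mass_def power2_eq_square algebra_simps)
  then have rev1: "1 < (1 + 2 * t) * prior t 3" using W by (simp add: prior_simps less_divide_eq)
  have "(1 + t) * (2 * t + 4) < (1 + 2 * t) * 4" using t by (simp add: algebra_simps)
  then have "(1 + t) * (2 * t + 4) / prior_mass t < (1 + 2 * t) * 4 / prior_mass t"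
    using W by (rule divide_strict_right_mono)
  then have rev2: "(1 + t) * (prior t 2 + prior t 3) < (1 + 2 * t) * prior t 3"
    by (simp add: prior_simps add_divide_distrib[symmetric])
  have mass: "prior t 1 + prior t 2 + prior t 3 = 1"
    using is_dist_prior[OF t(1)] unfolding is_dist_def sum_1_to_3 by simp
  have "price 3 (vals t) (prior t) = vals t 3"
    by (rule price_eqI; (unfold atLeastAtMost_1_3)?)
      (use t rev1 rev2 mass full_support_prior[OF t(1)] in \<open>auto simp: full_support_def G_3 vals_simps\<close>)
  then show ?thesis by (simp add: vals_simps)
qed

lemma mid_mass_le_low_mass:
  fixes t s1 s2 s3 :: real
  assumes t: "0 < t" and sum: "s1 + s2 + s3 = 1"
    and mid: "(1 + t) * (s2 + s3) \<le> 1" and top: "(1 + 2 * t) * s3 = 1"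
  shows "s2 \<le> s1"
proof -
  have "(1 + t) * (1 + 2 * t) * s2 + (1 + t) * ((1 + 2 * t) * s3)
      = (1 + 2 * t) * ((1 + t) * (s2 + s3))"
    by (simp add: algebra_simps)
  also have "\<dots> \<le> 1 + 2 * t" using mid t by simp
  finally have mid': "(1 + t) * (1 + 2 * t) * s2 \<le> t" using top by simp
  have "(1 + t) * (1 + 2 * t) * (2 * s2 + s3)
      = 2 * ((1 + t) * (1 + 2 * t) * s2) + (1 + t) * ((1 + 2 * t) * s3)"
    by (simp add: algebra_simps)
  also have "\<dots> \<le> 2 * t + (1 + t)" using mid' top by simp
  also have "\<dots> \<le> (1 + t) * (1 + 2 * t)" using t by (simp add: algebra_simps)
  finally have "(1 + t) * (1 + 2 * t) * (2 * s2 + s3) \<le> (1 + t) * (1 + 2 * t)" .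
  then show ?thesis using t sum by (simp add: mult_le_cancel_left1 pos_add_strict)
qed

text \<open>The middle value gets surplus only at price 1; tightness then forces (1 + 2t) S 3 = 1,
  and optimality of price 1 over price 1 + t bounds S 2 by S 1.\<close>
lemma tight_signal_mid_surplus:
  assumes t: "0 < t" and S: "is_dist 3 S"
    and tight: "surplus 3 (vals t) S = welfare 3 (vals t) S - (1 + 2 * t) * G 3 (vals t) S (1 + 2 * t)"
  shows "S 2 * cs 3 (vals t) S (1 + t) \<le> t * S 1"
proof -
  have S_nonneg: "0 \<le> S 1" "0 \<le> S 2" "0 \<le> S 3" and S_sum: "S 1 + S 2 + S 3 = 1"
    using S unfolding is_dist_def sum_1_to_3 by auto
  obtain k where k: "k \<in> {1..3}" "price 3 (vals t) S = vals t k"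
    and opt: "\<forall>j\<in>{1..3}. S j > 0 \<longrightarrow>
      vals t j * G 3 (vals t) S (vals t j) \<le> vals t k * G 3 (vals t) S (vals t k)"
    using price_attained[OF S] by metis
  show ?thesis
  proof (cases "k = 1")
    case False
    with k t have "1 + t \<le> price 3 (vals t) S" by (auto simp: vals_def)
    then have "cs 3 (vals t) S (1 + t) = 0" unfolding cs_def by auto
    then show ?thesis using t S_nonneg by simp
  next
    case True
    then have price: "price 3 (vals t) S = 1" using k by (simp add: vals_simps)
    show ?thesis
    proof (cases "S 2 = 0")
      case True
      then show ?thesis using t S_nonneg by simp
    next
      case False
      then have "(1 + t) * (S 2 + S 3) \<le> 1"
        using opt \<open>k = 1\<close> S_nonneg S_sum t by (auto simp: G_3 vals_simps order_less_le)
      moreover have "t * S 2 + 2 * t * S 3 = S 1 + (1 + t) * S 2"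
        using tight price t unfolding surplus_def welfare_def sum_1_to_3
        by (simp add: cs_def G_3 vals_simps algebra_simps)
      then have "(1 + 2 * t) * S 3 = 1" using S_sum by (simp add: algebra_simps)
      ultimately have "S 2 \<le> S 1" using mid_mass_le_low_mass t S_sum by blast
      moreover have "cs 3 (vals t) S (1 + t) = t" using price t unfolding cs_def by simp
      ultimately show ?thesis using t by (simp add: mult.commute)
    qed
  qed
qed

lemma buyer_optimal_mid_surplus:
  assumes t: "0 < t" "t < 1"
    and Z: "is_scheme 3 (prior t) Z" and opt: "buyer_optimal 3 (vals t) (prior t) Z"
  shows "cs_scheme 3 (vals t) (prior t) Z 2 \<le> t^2 / 2"
proof -
  note v = valid_values_vals[OF t(1)] and fD = full_support_prior[OF t(1)]
  have SUP: "(SUP p. p * G 3 (vals t) (prior t) p) = (1 + 2 * t) * G 3 (vals t) (prior t) (1 + 2 * t)"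
    using SUP_revenue_eq_price_revenue[OF v is_dist_prior[OF t(1)]] price_prior[OF t] by simp
  have "prior t 2 * cs_scheme 3 (vals t) (prior t) Z 2
      = (\<Sum>(S, \<gamma>)\<leftarrow>Z. \<gamma> * (S 2 * cs 3 (vals t) S (1 + t)))"
    using t prior_mass_pos[OF t(1)] by (subst mult_cs_scheme) (auto simp: prior_simps vals_simps)
  also have "\<dots> \<le> (\<Sum>(S, \<gamma>)\<leftarrow>Z. t * (\<gamma> * S 1))"
  proof (rule sum_list_mono, clarify)
    fix S \<gamma> assume S: "(S, \<gamma>) \<in> set Z"
    then have "is_dist 3 S" "0 \<le> \<gamma>" using Z unfolding is_scheme_def by auto
    show "\<gamma> * (S 2 * cs 3 (vals t) S (1 + t)) \<le> t * (\<gamma> * S 1)"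
    proof (cases "\<gamma> = 0")
      case False
      with \<open>0 \<le> \<gamma>\<close> have "0 < \<gamma>" by simp
      with S have "S 2 * cs 3 (vals t) S (1 + t) \<le> t * S 1"
        using buyer_optimal_signal_tight[OF v Z fD opt SUP] tight_signal_mid_surplus[OF t(1) \<open>is_dist 3 S\<close>]
        by blast
      then show ?thesis using \<open>0 \<le> \<gamma>\<close> by (simp add: mult_left_mono mult.left_commute)
    qed simp
  qed
  also have "\<dots> = t * prior t 1"
    using Z unfolding is_scheme_def by (simp add: split_def sum_list_const_mult)
  finally have "2 * t * cs_scheme 3 (vals t) (prior t) Z 2 / prior_mass t \<le> t * t^2 / prior_mass t"
    by (simp add: prior_simps)
  then have "2 * t * cs_scheme 3 (vals t) (prior t) Z 2 \<le> 2 * t * (t^2 / 2)"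
    using prior_mass_pos[OF t(1)] by (simp add: divide_le_cancel)
  then show ?thesis using t by simp
qed

lemma prior_lowest_le:
  assumes t: "0 < t" "t < 1"
  shows "prior t 1 \<le> prior t 2" "prior t 1 \<le> prior t 3"
proof -
  have W: "0 < prior_mass t" using prior_mass_pos[OF t(1)] .
  have "t^2 \<le> 2 * t" using t by (simp add: power2_eq_square)
  moreover from this have "t^2 \<le> 4" using t by simp
  ultimately show "prior t 1 \<le> prior t 2" "prior t 1 \<le> prior t 3"
    using W by (simp_all add: prior_simps divide_right_mono)
qed

lemma Pf_prior_twice_lowest_mass:
  assumes t: "0 < t" "t < 1" and Z: "is_scheme 3 (prior t) Z"
  shows "Pf (surplus_steps 3 (vals t) (prior t) Z) (2 * prior t 1)
    = prior t 1 * min (cs_scheme 3 (vals t) (prior t) Z 2) (cs_scheme 3 (vals t) (prior t) Z 3)"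
proof -
  have W: "0 < prior_mass t" using prior_mass_pos[OF t(1)] .
  note prior_lowest_le[OF t]
  moreover have "0 < prior t 1" "0 < prior t 2" "0 < prior t 3"
    using W t by (simp_all add: prior_simps)
  ultimately show ?thesis
    unfolding surplus_steps_3 cs_scheme_lowest_value[OF valid_values_vals[OF t(1)] Z]
    by (intro Pf_three_steps_first_zero cs_scheme_nonneg[OF Z])
qed

definition low_signal :: "real \<Rightarrow> nat \<Rightarrow> real" where
  "low_signal t i = (if i = 1 then 2 * t else if i = 2 then 1 else 0) / (1 + 2 * t)"

definition mid_signal :: "real \<Rightarrow> nat \<Rightarrow> real" where
  "mid_signal t i = (if i = 2 then 3 * t else if i = 3 then 2 else 0) / (2 + 3 * t)"

definition top_signal :: "nat \<Rightarrow> real" where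
  "top_signal i = (if i = 3 then 1 else 0)"

text \<open>The low signal pools all of value 1 with a quarter of value 1 + t, the mid signal the rest
  of 1 + t with a quarter of 1 + 2t; the prices are 1, 1 + t and 1 + 2t, so both upper values
  receive average surplus t/4.\<close>
definition split_scheme :: "real \<Rightarrow> scheme" where
  "split_scheme t =
    [(low_signal t, t * (1 + 2 * t) / (2 * prior_mass t)),
     (mid_signal t, (2 + 3 * t) / (2 * prior_mass t)),
     (top_signal, 3 / prior_mass t)]"

lemma low_signal_simps:
  "low_signal t 1 = 2 * t / (1 + 2 * t)" "low_signal t (Suc 0) = 2 * t / (1 + 2 * t)"
  "low_signal t 2 = 1 / (1 + 2 * t)" "low_signal t 3 = 0"
  by (simp_all add: low_signal_def)

lemma mid_signal_simps:
  "mid_signal t 1 = 0" "mid_signal t (Suc 0) = 0"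
  "mid_signal t 2 = 3 * t / (2 + 3 * t)" "mid_signal t 3 = 2 / (2 + 3 * t)"
  by (simp_all add: mid_signal_def)

lemma top_signal_simps: "top_signal 1 = 0" "top_signal (Suc 0) = 0" "top_signal 2 = 0" "top_signal 3 = 1"
  by (simp_all add: top_signal_def)

lemma price_low_signal: "0 < t \<Longrightarrow> price 3 (vals t) (low_signal t) = 1"
proof -
  assume t: "0 < t"
  have demand_mid: "(1 + t) * (1 / (1 + 2 * t)) \<le> 2 * t / (1 + 2 * t) + 1 / (1 + 2 * t)"
    using t by (simp add: field_simps)
  have "price 3 (vals t) (low_signal t) = vals t 1"
    by (rule price_eqI; (unfold atLeastAtMost_1_3)?)
      (use t demand_mid in \<open>auto simp: G_3 vals_simps low_signal_simps\<close>)
  then show ?thesis by (simp add: vals_simps)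
qed

lemma price_mid_signal: "0 < t \<Longrightarrow> price 3 (vals t) (mid_signal t) = 1 + t"
proof -
  assume t: "0 < t"
  have "(1 + 2 * t) * 2 \<le> (1 + t) * (3 * t + 2)"
    using t by (simp add: algebra_simps)
  then have demand_top: "(1 + 2 * t) * (2 / (2 + 3 * t)) \<le> (1 + t) * (3 * t / (2 + 3 * t) + 2 / (2 + 3 * t))"
    using t by (simp add: add_divide_distrib[symmetric] divide_right_mono)
  have "price 3 (vals t) (mid_signal t) = vals t 2"
    by (rule price_eqI; (unfold atLeastAtMost_1_3)?)
      (use t demand_top in \<open>auto simp: G_3 vals_simps mid_signal_simps\<close>)
  then show ?thesis by (simp add: vals_simps)
qed

lemma price_top_signal: "0 < t \<Longrightarrow> price 3 (vals t) top_signal = 1 + 2 * t"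
proof -
  assume t: "0 < t"
  have "price 3 (vals t) top_signal = vals t 3"
    by (rule price_eqI; (unfold atLeastAtMost_1_3)?)
      (use t in \<open>auto simp: G_3 vals_simps top_signal_simps\<close>)
  then show ?thesis by (simp add: vals_simps)
qed

lemma is_scheme_split_scheme:
  assumes t: "0 < t"
  shows "is_scheme 3 (prior t) (split_scheme t)"
proof -
  have W: "prior_mass t \<noteq> 0" using prior_mass_pos[OF t] by simp
  have nz: "1 + 2 * t \<noteq> 0" "2 + 3 * t \<noteq> 0" using t by simp_all
  have dists: "is_dist 3 (low_signal t)" "is_dist 3 (mid_signal t)" "is_dist 3 top_signal"
    unfolding is_dist_def sum_1_to_3 using t nz
    by (auto simp: low_signal_def mid_signal_def top_signal_def add_divide_distrib[symmetric])
  have weights: "t * (1 + 2 * t) / (2 * prior_mass t) + ((2 + 3 * t) / (2 * prior_mass t)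
      + 3 / prior_mass t) = 1"
    using W by (simp add: field_simps) (simp add: prior_mass_def power2_eq_square algebra_simps)
  have mixture: "t * (1 + 2 * t) / (2 * prior_mass t) * low_signal t i
      + ((2 + 3 * t) / (2 * prior_mass t) * mid_signal t i + 3 / prior_mass t * top_signal i)
      = prior t i" for i
    using W nz by (auto simp: low_signal_def mid_signal_def top_signal_def prior_def divide_simps
        power2_eq_square)
  show ?thesis
    unfolding is_scheme_def split_scheme_def using dists weights mixture t W
    by (auto simp: less_imp_le prior_mass_pos)
qed

lemma cs_scheme_split_scheme:
  assumes t: "0 < t"
  shows "cs_scheme 3 (vals t) (prior t) (split_scheme t) 2 = t / 4"
    and "cs_scheme 3 (vals t) (prior t) (split_scheme t) 3 = t / 4"
proof -
  have W: "prior_mass t \<noteq> 0" using prior_mass_pos[OF t] by simp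
  have nz: "1 + 2 * t \<noteq> 0" "2 + 3 * t \<noteq> 0" using t by simp_all
  have "prior t 2 * cs_scheme 3 (vals t) (prior t) (split_scheme t) 2 = t * (t / (2 * prior_mass t))"
    using t W nz
    by (subst mult_cs_scheme) (simp_all add: split_scheme_def cs_def price_low_signal
        price_mid_signal price_top_signal vals_simps prior_simps low_signal_simps mid_signal_simps
        top_signal_simps)
  then show "cs_scheme 3 (vals t) (prior t) (split_scheme t) 2 = t / 4"
    using t W by (simp add: prior_simps field_simps)
  have "prior t 3 * cs_scheme 3 (vals t) (prior t) (split_scheme t) 3 = t * (1 / prior_mass t)"
    using t W nz
    by (subst mult_cs_scheme) (simp_all add: split_scheme_def cs_def price_low_signal
        price_mid_signal price_top_signal vals_simps prior_simps low_signal_simps mid_signal_simps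
        top_signal_simps)
  then show "cs_scheme 3 (vals t) (prior t) (split_scheme t) 3 = t / 4"
    using t W by (simp add: prior_simps field_simps)
qed

lemma buyer_optimal_not_majorized:
  assumes t: "0 < t" "t < 1" and \<alpha>: "0 \<le> \<alpha>" "\<alpha> * t < 1 / 2"
    and Z: "is_scheme 3 (prior t) Z" and opt: "buyer_optimal 3 (vals t) (prior t) Z"
  shows "\<not> majorized \<alpha> 3 (vals t) (prior t) Z"
proof
  assume maj: "majorized \<alpha> 3 (vals t) (prior t) Z"
  have p1: "0 < prior t 1" using t prior_mass_pos[OF t(1)] by (simp add: prior_simps)
  have "prior t 1 + prior t 2 + prior t 3 = 1" "0 \<le> prior t 3"
    using is_dist_prior[OF t(1)] unfolding is_dist_def sum_1_to_3 by auto
  then have m: "0 < 2 * prior t 1" "2 * prior t 1 \<le> 1" using p1 prior_lowest_le[OF t] by linarith+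
  have "Pf (surplus_steps 3 (vals t) (prior t) Z) (2 * prior t 1) \<le> prior t 1 * (t^2 / 2)"
    using Pf_prior_twice_lowest_mass[OF t Z] buyer_optimal_mid_surplus[OF t Z opt] p1
    by (simp add: min_le_iff_disj mult_left_mono)
  then have "\<alpha> * Pf (surplus_steps 3 (vals t) (prior t) Z) (2 * prior t 1)
      \<le> prior t 1 * t * (\<alpha> * t) / 2"
    using \<alpha>(1) by (simp add: mult_left_mono power2_eq_square mult_ac)
  also have "\<dots> < prior t 1 * t / 4"
    using \<alpha>(2) p1 t by (simp add: mult_strict_left_mono)
  also have "\<dots> = Pf (surplus_steps 3 (vals t) (prior t) (split_scheme t)) (2 * prior t 1)"
    using Pf_prior_twice_lowest_mass[OF t is_scheme_split_scheme[OF t(1)]] cs_scheme_split_scheme[OF t(1)] by simp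
  finally show False
    using maj m is_scheme_split_scheme[OF t(1)] unfolding majorized_def by (meson not_le)
qed

theorem theorem3:
  fixes \<alpha> :: real
  assumes "\<alpha> \<ge> 1"
  shows "\<exists>n v fD. valid_values n v \<and> is_dist n fD \<and> full_support n fD \<and>
           (\<forall>Z. is_scheme n fD Z \<and> buyer_optimal n v fD Z \<longrightarrow> \<not> majorized \<alpha> n v fD Z)"
proof -
  define t where "t = 1 / (4 * \<alpha>)"
  have t: "0 < t" "t < 1" and "\<alpha> * t < 1 / 2" using assms by (auto simp: t_def field_simps)
  then show ?thesis
    using valid_values_vals is_dist_prior full_support_prior assms
      buyer_optimal_not_majorized[OF t, of \<alpha>]
    by (intro exI[of _ 3] exI[of _ "vals t"] exI[of _ "prior t"]) simp
qed

end
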